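(* Let (A.1), (A.2), (A.4), (A.5) and (A.6) below hold for some $q>2$ and $p\ge1$. Then $$\sup_{u\in[0,1]}|I_n^2(u)|=o_P(1/\sqrt n)+\mathcal O_P\big(L_n^{\min(p,2)}n^{-2/\max(p,2)}\big).$$ In particular, $\sup_{u\in[0,1]}|I_n^2(u)|=o_P(1/\sqrt n)$ if $L_n/n^{1/p-1/4}\to0$ in the case $p\ge2$, and if $L_n/n^{1/(2p)}\to0$ in the case $p\in[1,2)$.
   Context: $(\epsilon_i)_{i\in\mathbb Z}$ i.i.d. random variables; $\boldsymbol{\epsilon}_t=(\epsilon_t,\epsilon_{t-1},\dots)$. Measurable kernels $G_n,G:\mathbb R\times\mathbb R^\infty\to\mathbb R^d$, $X_{t,n}=G_n(t/n,\boldsymbol{\epsilon}_t)$, $\|Y\|_{L_q}=(\mathbb E\|Y\|^q)^{1/q}$, $\|G_n\|_{p\text{-var}}=\sup_{0=u_0<\dots<u_m=1}(\sum_i\|G_n(u_i,\boldsymbol{\epsilon}_0)-G_n(u_{i-1},\boldsymbol{\epsilon}_0)\|_{L_q}^p)^{1/p}$. (A.1) $\sup_u\|G_n(u,\boldsymbol{\epsilon}_0)-G(u,\boldsymbol{\epsilon}_0)\|_{L_q}\to0$. (A.2) $\sup_n\sup_u\|G_n(u,\boldsymbol{\epsilon}_0)\|_{L_q}+\sup_n\|G_n\|_{p\text{-var}}\le C_G<\infty$. $\mu^n_u=\mathbb EG_n(u,\boldsymbol{\epsilon}_0)$, $\mu_u=\mathbb EG(u,\boldsymbol{\epsilon}_0)$,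 $\mathcal M=\mathrm{conv}\{\mu_u:u\in[0,1]\}$, $\mathcal M^\delta$ its open $\delta$-neighborhood. $f:\mathbb R^d\to\mathbb R$ twice differentiable, Hessian $D^2f$. (A.4) for some $\delta\in(0,\infty]$, $C_f$: $|f|+\|Df\|+\|D^2f\|\le C_f$ on $\mathcal M^\delta$. Estimators $\hat\mu_{t,n}\in\mathbb R^d$ are $\sigma(\epsilon_t,\epsilon_{t-1},\dots)$-measurable; integer sequences $\tau_n\ge1$, $L_n\to\infty$. (A.5) $\sum_{t=\tau_n}^n\|\hat\mu_{t,n}-\mu^n_{t/n}\|^2=o_P(\sqrt n)$. (A.6) $P(\hat\mu_{t,n}\in\mathcal M^\delta,\ t=\tau_n,\dots,n)\to1$. Define $I_n^2(u)=\frac1n\sum_{t=\tau_n+L_n}^{\lfloor nu\rfloor}(\mu^n_{t/n}-\hat\mu_{t-L_n,n})^T\frac{D^2f(\tilde\mu_{t,n})}2(\mu^n_{t/n}-\hat\mu_{t-L_n,n})$, where $\tilde\mu_{t,n}$ is a point on the line segment between $\hat\mu_{t-L_n,n}$ and $\mu^n_{t/n}$ (the intermediate point in the Lagrange form of the second-order Taylor expansion of $f$). *)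

theory Defs
  imports "HOL-Probability.Probability"
begin

definition enn_powr :: "ennreal \<Rightarrow> real \<Rightarrow> ennreal" where
  "enn_powr x r = (if x = \<infinity> then \<infinity> else ennreal (enn2real x powr r))"

definition Lq_norm :: "'a measure \<Rightarrow> real \<Rightarrow> ('a \<Rightarrow> 'b::real_normed_vector) \<Rightarrow> ennreal" where
  "Lq_norm M q Y = enn_powr (\<integral>\<^sup>+ \<omega>. ennreal (norm (Y \<omega>) powr q) \<partial>M) (1 / q)"

definition epsvec :: "(int \<Rightarrow> 'a \<Rightarrow> real) \<Rightarrow> int \<Rightarrow> 'a \<Rightarrow> (nat \<Rightarrow> real)" where
  "epsvec eps t \<omega> = (\<lambda>k. eps (t - int k) \<omega>)"

definition partitions01 :: "(nat \<times> (nat \<Rightarrow> real)) set" where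
  "partitions01 = {(m, u). m \<ge> 1 \<and> u 0 = 0 \<and> u m = 1 \<and> (\<forall>i<m. u i < u (Suc i))}"

definition pvar :: "'a measure \<Rightarrow> real \<Rightarrow> real \<Rightarrow> (real \<Rightarrow> 'a \<Rightarrow> 'b::real_normed_vector) \<Rightarrow> ennreal" where
  "pvar M q p H = (SUP (m, u) \<in> partitions01.
      enn_powr (\<Sum>i<m. enn_powr (Lq_norm M q (\<lambda>\<omega>. H (u (Suc i)) \<omega> - H (u i) \<omega>)) p) (1 / p))"

definition past_sigma :: "'a measure \<Rightarrow> (int \<Rightarrow> 'a \<Rightarrow> real) \<Rightarrow> int \<Rightarrow> 'a measure" where
  "past_sigma M eps t = sigma (space M)
     {eps s -` B \<inter> space M | s B. s \<le> t \<and> B \<in> sets borel}"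

text \<open>Stochastic order symbols (defined via outer probability, so that no measurability
  of X is required; for measurable X they coincide with the usual notions).\<close>
definition small_oP :: "'a measure \<Rightarrow> (nat \<Rightarrow> 'a \<Rightarrow> real) \<Rightarrow> (nat \<Rightarrow> real) \<Rightarrow> bool" where
  "small_oP M X r \<longleftrightarrow> (\<forall>e>0. \<forall>\<eta>>0. \<forall>\<^sub>F n in sequentially.
      \<exists>A\<in>sets M. measure M A < \<eta> \<and> {\<omega>\<in>space M. \<bar>X n \<omega>\<bar> > e * r n} \<subseteq> A)"

definition big_OP :: "'a measure \<Rightarrow> (nat \<Rightarrow> 'a \<Rightarrow> real) \<Rightarrow> (nat \<Rightarrow> real) \<Rightarrow> bool" where
  "big_OP M X r \<longleftrightarrow> (\<forall>\<eta>>0. \<exists>K. \<forall>\<^sub>F n in sequentially.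
      \<exists>A\<in>sets M. measure M A < \<eta> \<and> {\<omega>\<in>space M. \<bar>X n \<omega>\<bar> > K * r n} \<subseteq> A)"

definition oP_plus_OP :: "'a measure \<Rightarrow> (nat \<Rightarrow> 'a \<Rightarrow> real) \<Rightarrow> (nat \<Rightarrow> real) \<Rightarrow> (nat \<Rightarrow> real) \<Rightarrow> bool" where
  "oP_plus_OP M X r s \<longleftrightarrow> (\<exists>Y Z. (\<forall>n. \<forall>\<omega>\<in>space M. X n \<omega> = Y n \<omega> + Z n \<omega>)
      \<and> small_oP M Y r \<and> big_OP M Z s)"

definition nbhd :: "'d::metric_space set \<Rightarrow> ereal \<Rightarrow> 'd set" where
  "nbhd S \<delta> = {x. \<exists>y\<in>S. ereal (dist x y) < \<delta>}"

end

theory Submission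
  imports Defs
begin

(* On the event that all estimates lie in the delta-neighbourhood of the convex set M
   (probability tending to 1 by (A.6)), and for n so large that all means mu^n_u lie there
   as well (by (A.1)), every intermediate point lies in that neighbourhood by convexity, so the
   t-th summand of I_n^2 is at most
     C_f (|mu^n_{t/n} - mu^n_{(t-L)/n}|^2 + |mu^n_{(t-L)/n} - muhat_{t-L}|^2).
   The second sum is o_P(sqrt n) by (A.5).  The mean function inherits the p-variation bound of
   (A.2), since |E Z| <= |Z|_{L_q}; splitting the indices into the L residue classes modulo L turns
   the lagged increments d_t into L chains of consecutive increments, so that
   sum_t d_t^p <= L C^p and d_t <= C.  Interpolating between the exponents p and 2 then gives
   sum_t d_t^2 / n = O(L^min(p,2) n^(-2/max(p,2))). *)

section \<open>L_q norms and means\<close>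

lemma le_Young_powr_affine:
  fixes x l q :: real
  assumes x: "0 \<le> x" and l: "0 < l" and q: "1 < q"
  shows "x \<le> l / q * (x / l) powr q + l * (1 - 1 / q)"
proof -
  have "(x / l) * 1 \<le> (x / l) powr q / q + 1 powr (q / (q - 1)) / (q / (q - 1))"
    using assms by (intro Youngs_inequality) (auto simp: field_simps)
  then show ?thesis
    using l q by (simp add: field_simps)
qed

lemma nn_integral_norm_le_Lq_norm:
  fixes Z :: "'a \<Rightarrow> 'b::real_normed_vector"
  assumes M: "prob_space M" and Z: "Z \<in> borel_measurable M" and q: "q > 1"
  shows "(\<integral>\<^sup>+\<omega>. ennreal (norm (Z \<omega>)) \<partial>M) \<le> Lq_norm M q Z"
proof -
  interpret prob_space M by fact
  define I where "I = (\<integral>\<^sup>+\<omega>. ennreal (norm (Z \<omega>) powr q) \<partial>M)"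
  have Zq: "(\<lambda>\<omega>. ennreal (norm (Z \<omega>) powr q)) \<in> borel_measurable M"
    using Z by measurable
  show ?thesis
  proof (cases I)
    case (real c)
    then have c: "c \<ge> 0" "I = ennreal c" .
    have Lq: "Lq_norm M q Z = ennreal (c powr (1/q))"
      using c by (simp add: Lq_norm_def enn_powr_def I_def[symmetric])
    show ?thesis
    proof (cases "c = 0")
      case True
      have "AE \<omega> in M. ennreal (norm (Z \<omega>) powr q) = 0"
        using c True Zq unfolding I_def by (simp add: nn_integral_0_iff_AE)
      then have "AE \<omega> in M. ennreal (norm (Z \<omega>)) = 0"
        by eventually_elim (auto simp: powr_def split: if_splits)
      moreover have "(\<lambda>\<omega>. ennreal (norm (Z \<omega>))) \<in> borel_measurable M"
        using Z by measurable
      ultimately have "(\<integral>\<^sup>+\<omega>. ennreal (norm (Z \<omega>)) \<partial>M) = 0"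
        by (simp add: nn_integral_0_iff_AE)
      then show ?thesis by simp
    next
      case False
      define l where "l = c powr (1/q)"
      have l: "l > 0" "l powr q = c"
        using c False q by (auto simp: l_def powr_powr)
      have "norm z \<le> l / (q * c) * norm z powr q + l * (1 - 1/q)" for z :: 'b
        using le_Young_powr_affine[OF norm_ge_zero l(1) q, of z] l by (simp add: powr_divide)
      then have "(\<integral>\<^sup>+\<omega>. ennreal (norm (Z \<omega>)) \<partial>M)
          \<le> (\<integral>\<^sup>+\<omega>. ennreal (l / (q * c)) * ennreal (norm (Z \<omega>) powr q) + ennreal (l * (1 - 1/q)) \<partial>M)"
        using l q c
        by (intro nn_integral_mono) (simp add: ennreal_mult'[symmetric] ennreal_plus[symmetric] del: ennreal_plus)
      also have "\<dots> = ennreal (l / (q * c)) * I + ennreal (l * (1 - 1/q))"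
        using Zq unfolding I_def by (simp add: nn_integral_add nn_integral_cmult emeasure_space_1)
      also have "\<dots> = ennreal l"
        using c l q False by (simp add: ennreal_mult'[symmetric] ennreal_plus[symmetric] field_simps del: ennreal_plus)
      finally show ?thesis
        by (simp add: Lq l_def)
    qed
  next
    case top
    then show ?thesis
      by (simp add: Lq_norm_def enn_powr_def I_def[symmetric])
  qed
qed

lemma integrable_if_Lq_norm_finite:
  fixes Z :: "'a \<Rightarrow> 'b::{banach, second_countable_topology}"
  assumes "prob_space M" "Z \<in> borel_measurable M" "q > 1" "Lq_norm M q Z \<noteq> \<infinity>"
  shows "integrable M Z"
  using nn_integral_norm_le_Lq_norm[OF assms(1-3)] assms(2,4)
  by (auto simp: integrable_iff_bounded top.not_eq_extremum intro: le_less_trans)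

lemma norm_integral_le_Lq_norm:
  fixes Z :: "'a \<Rightarrow> 'b::{banach, second_countable_topology}"
  assumes "prob_space M" "Z \<in> borel_measurable M" "q > 1"
  shows "ennreal (norm (integral\<^sup>L M Z)) \<le> Lq_norm M q Z"
proof (cases "integrable M Z")
  case True
  show ?thesis
    by (rule order_trans[OF integral_norm_bound_ennreal[OF True] nn_integral_norm_le_Lq_norm[OF assms]])
qed (simp add: not_integrable_integral_eq)

lemma norm_diff_integral_le_Lq_norm:
  fixes X Y :: "'a \<Rightarrow> 'b::{banach, second_countable_topology}"
  assumes M: "prob_space M" and q: "q > 1" and X: "integrable M X" and Y: "integrable M Y"
  shows "ennreal (norm (integral\<^sup>L M X - integral\<^sup>L M Y)) \<le> Lq_norm M q (\<lambda>\<omega>. X \<omega> - Y \<omega>)"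
proof -
  have "integral\<^sup>L M X - integral\<^sup>L M Y = integral\<^sup>L M (\<lambda>\<omega>. X \<omega> - Y \<omega>)"
    using X Y by simp
  moreover have "ennreal (norm (integral\<^sup>L M (\<lambda>\<omega>. X \<omega> - Y \<omega>))) \<le> Lq_norm M q (\<lambda>\<omega>. X \<omega> - Y \<omega>)"
    using X Y by (intro norm_integral_le_Lq_norm[OF M _ q]) auto
  ultimately show ?thesis by simp
qed

section \<open>p-variation of the mean function\<close>

lemma enn_powr_ennreal: "c \<ge> 0 \<Longrightarrow> enn_powr (ennreal c) r = ennreal (c powr r)"
  by (simp add: enn_powr_def)

lemma enn_powr_mono:
  assumes "x \<le> y" "r \<ge> 0"
  shows "enn_powr x r \<le> enn_powr y r"
  using assms by (cases x; cases y) (auto simp: enn_powr_def ennreal_le_iff top_unique intro!: powr_mono2)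

lemma partitions01_through_chain:
  fixes v :: "nat \<Rightarrow> real"
  assumes inc: "\<And>j. j < k \<Longrightarrow> v j < v (Suc j)" and v0: "0 < v 0" and vk: "v k \<le> 1"
  obtains m u where "(m, u) \<in> partitions01" "k < m" "\<And>j. j \<le> k \<Longrightarrow> u (Suc j) = v j"
proof
  define u where "u i = (if i = 0 then 0 else if i \<le> k + 1 then v (i - 1) else 1)" for i
  define m where "m = (if v k = 1 then k + 1 else k + 2)"
  show "(m, u) \<in> partitions01"
    unfolding partitions01_def
  proof safe
    show "1 \<le> m" "u 0 = 0" "u m = 1"
      using vk by (auto simp: u_def m_def)
    fix i assume "i < m"
    then show "u i < u (Suc i)"
      using v0 vk inc[of "i - 1"]
      by (cases "i = Suc k") (auto simp: u_def m_def split: if_splits)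
  qed
  show "k < m" "\<And>j. j \<le> k \<Longrightarrow> u (Suc j) = v j"
    by (auto simp: u_def m_def)
qed

lemma pvar_chain_sum_le:
  fixes H :: "real \<Rightarrow> 'a \<Rightarrow> 'b::real_normed_vector"
  assumes pv: "pvar M q p H \<le> ennreal C" and C: "C \<ge> 0" and p: "p \<ge> 1"
    and inc: "\<And>j. j < k \<Longrightarrow> v j < v (Suc j)" and v0: "0 < v 0" and vk: "v k \<le> 1"
  shows "(\<Sum>j<k. enn_powr (Lq_norm M q (\<lambda>\<omega>. H (v (Suc j)) \<omega> - H (v j) \<omega>)) p) \<le> ennreal (C powr p)"
proof -
  obtain m u where part: "(m, u) \<in> partitions01" and km: "k < m"
    and uv: "\<And>j. j \<le> k \<Longrightarrow> u (Suc j) = v j"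
    using partitions01_through_chain[OF inc v0 vk] by blast
  define T where "T i = enn_powr (Lq_norm M q (\<lambda>\<omega>. H (u (Suc i)) \<omega> - H (u i) \<omega>)) p" for i
  have "enn_powr (\<Sum>i<m. T i) (1/p) \<le> pvar M q p H"
    unfolding pvar_def T_def by (rule SUP_upper2[OF part]) simp
  then have "enn_powr (\<Sum>i<m. T i) (1/p) \<le> ennreal C"
    using pv by (rule order_trans)
  then have "enn_powr (enn_powr (\<Sum>i<m. T i) (1/p)) p \<le> enn_powr (ennreal C) p"
    using p by (intro enn_powr_mono) auto
  moreover have "enn_powr (ennreal C) p = ennreal (C powr p)"
    using C by (rule enn_powr_ennreal)
  moreover have "enn_powr (enn_powr S (1/p)) p = S" for S
    using p by (cases S) (auto simp: enn_powr_def powr_powr)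
  moreover have "(\<Sum>j<k. T (Suc j)) \<le> (\<Sum>i<m. T i)"
  proof -
    have "(\<Sum>j<k. T (Suc j)) = (\<Sum>i\<in>Suc ` {..<k}. T i)"
      by (simp add: sum.reindex)
    also have "\<dots> \<le> (\<Sum>i<m. T i)"
      using km by (intro sum_mono2) auto
    finally show ?thesis .
  qed
  moreover have "(\<Sum>j<k. T (Suc j)) = (\<Sum>j<k. enn_powr (Lq_norm M q (\<lambda>\<omega>. H (v (Suc j)) \<omega> - H (v j) \<omega>)) p)"
    by (intro sum.cong) (auto simp: T_def uv)
  ultimately show ?thesis by (metis order_trans)
qed

lemma mean_increments_chain_sum_le:
  fixes H :: "real \<Rightarrow> 'a \<Rightarrow> 'b::{banach, second_countable_topology}"
  assumes M: "prob_space M" and H: "\<And>u. H u \<in> borel_measurable M" and q: "q > 1"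
    and H_Lq: "\<And>u. u \<in> {0..1} \<Longrightarrow> Lq_norm M q (H u) \<noteq> \<infinity>"
    and pv: "pvar M q p H \<le> ennreal C" and C: "C \<ge> 0" and p: "p \<ge> 1"
    and inc: "\<And>j. j < k \<Longrightarrow> v j < v (Suc j)" and v0: "0 < v 0" and vk: "v k \<le> 1"
  shows "(\<Sum>j<k. norm (integral\<^sup>L M (H (v (Suc j))) - integral\<^sup>L M (H (v j))) powr p) \<le> C powr p"
proof -
  have v01: "v j \<in> {0..1}" if "j \<le> k" for j
    using lift_Suc_mono_le_ivl[of "{..<k}" v 0 j] lift_Suc_mono_le_ivl[of "{..<k}" v j k]
      inc v0 vk that by force
  have increment: "ennreal (norm (integral\<^sup>L M (H (v (Suc j))) - integral\<^sup>L M (H (v j))) powr p)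
      \<le> enn_powr (Lq_norm M q (\<lambda>\<omega>. H (v (Suc j)) \<omega> - H (v j) \<omega>)) p" if "j < k" for j
  proof -
    have "ennreal (norm (integral\<^sup>L M (H (v (Suc j))) - integral\<^sup>L M (H (v j))))
        \<le> Lq_norm M q (\<lambda>\<omega>. H (v (Suc j)) \<omega> - H (v j) \<omega>)"
      using that v01 by (intro norm_diff_integral_le_Lq_norm[OF M q]
          integrable_if_Lq_norm_finite[OF M H q] H_Lq) auto
    then have "enn_powr (ennreal (norm (integral\<^sup>L M (H (v (Suc j))) - integral\<^sup>L M (H (v j))))) p
        \<le> enn_powr (Lq_norm M q (\<lambda>\<omega>. H (v (Suc j)) \<omega> - H (v j) \<omega>)) p"
      using p by (intro enn_powr_mono) auto
    then show ?thesis
      by (simp add: enn_powr_ennreal)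
  qed
  have "ennreal (\<Sum>j<k. norm (integral\<^sup>L M (H (v (Suc j))) - integral\<^sup>L M (H (v j))) powr p)
      = (\<Sum>j<k. ennreal (norm (integral\<^sup>L M (H (v (Suc j))) - integral\<^sup>L M (H (v j))) powr p))"
    by (rule sum_ennreal[symmetric]) simp
  also have "\<dots> \<le> (\<Sum>j<k. enn_powr (Lq_norm M q (\<lambda>\<omega>. H (v (Suc j)) \<omega> - H (v j) \<omega>)) p)"
    using increment by (intro sum_mono) simp
  also have "\<dots> \<le> ennreal (C powr p)"
    by (rule pvar_chain_sum_le[OF pv C p inc v0 vk])
  finally show ?thesis
    by (simp add: ennreal_le_iff)
qed

section \<open>Sums of squared lagged increments\<close>

lemma sq_le_powr_mult_powr:
  fixes x C p :: real
  assumes "0 \<le> x" "x \<le> C" "p \<le> 2"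
  shows "x\<^sup>2 \<le> C powr (2 - p) * x powr p"
proof (cases "x = 0")
  case False
  then have "x\<^sup>2 = x powr (2 - p) * x powr p"
    using assms by (simp add: powr_add[symmetric] powr_numeral)
  also have "\<dots> \<le> C powr (2 - p) * x powr p"
    using assms by (intro mult_right_mono powr_mono2) auto
  finally show ?thesis .
qed simp

lemma sq_le_threshold_powr:
  fixes x e p :: real
  assumes "0 \<le> x" "0 < e" "p \<ge> 2"
  shows "x\<^sup>2 \<le> e\<^sup>2 + e powr (2 - p) * x powr p"
proof (cases "x \<le> e")
  case True
  then show ?thesis
    using assms by (simp add: add_increasing2 power_mono)
next
  case False
  then have "x\<^sup>2 = x powr (2 - p) * x powr p"
    using assms by (simp add: powr_add[symmetric] powr_numeral)
  also have "\<dots> \<le> e powr (2 - p) * x powr p"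
    using assms False by (intro mult_right_mono powr_mono2') auto
  finally show ?thesis
    by (simp add: add_increasing)
qed

lemma sum_sq_le_of_sum_powr_le_small_p:
  fixes d :: "nat \<Rightarrow> real"
  assumes d: "\<And>t. t \<in> A \<Longrightarrow> 0 \<le> d t \<and> d t \<le> C"
    and sum_powr: "(\<Sum>t\<in>A. d t powr p) \<le> B" and p: "p \<le> 2"
  shows "(\<Sum>t\<in>A. (d t)\<^sup>2) \<le> C powr (2 - p) * B"
proof -
  have "(\<Sum>t\<in>A. (d t)\<^sup>2) \<le> (\<Sum>t\<in>A. C powr (2 - p) * d t powr p)"
    using d p by (intro sum_mono sq_le_powr_mult_powr) auto
  also have "\<dots> \<le> C powr (2 - p) * B"
    using sum_powr by (simp add: sum_distrib_left[symmetric] mult_left_mono)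
  finally show ?thesis .
qed

lemma sum_sq_le_of_sum_powr_le_large_p:
  fixes d :: "nat \<Rightarrow> real"
  assumes d: "\<And>t. t \<in> {a..n} \<Longrightarrow> 0 \<le> d t"
    and sum_powr: "(\<Sum>t\<in>{a..n}. d t powr p) \<le> B" and p: "p \<ge> 2" and n: "n \<ge> 1" and a: "a \<ge> 1"
  shows "(\<Sum>t\<in>{a..n}. (d t)\<^sup>2) \<le> real n powr (1 - 2 / p) * (1 + B)"
proof -
  \<comment> \<open>the threshold e balances the two terms of the pointwise bound\<close>
  define e where "e = real n powr (- 1 / p)"
  have "- 1 / p * (2 - p) = 1 - 2 / p" "- 1 / p * 2 = - 2 / p"
    using p by (auto simp: field_simps)
  then have e: "e > 0" "e\<^sup>2 = real n powr (- 2 / p)" "e powr (2 - p) = real n powr (1 - 2 / p)"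
    using n by (auto simp: e_def powr_powr powr_numeral[symmetric])
  have "(\<Sum>t\<in>{a..n}. (d t)\<^sup>2) \<le> (\<Sum>t\<in>{a..n}. e\<^sup>2 + e powr (2 - p) * d t powr p)"
    using d e p by (intro sum_mono sq_le_threshold_powr) auto
  also have "\<dots> = real (card {a..n}) * e\<^sup>2 + e powr (2 - p) * (\<Sum>t\<in>{a..n}. d t powr p)"
    by (simp add: sum.distrib sum_distrib_left)
  also have "\<dots> \<le> real n * e\<^sup>2 + e powr (2 - p) * B"
    using sum_powr a by (intro add_mono mult_right_mono mult_left_mono) auto
  also have "\<dots> = real n powr (1 - 2 / p) * (1 + B)"
    using n unfolding e by (simp add: powr_diff powr_minus field_simps)
  finally show ?thesis .
qed

lemma sum_sq_div_le_of_sum_powr_le: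
  fixes d :: "nat \<Rightarrow> real"
  assumes d: "\<And>t. t \<in> {a..n} \<Longrightarrow> 0 \<le> d t \<and> d t \<le> C"
    and sum_powr: "(\<Sum>t\<in>{a..n}. d t powr p) \<le> real L * C powr p"
    and C: "C \<ge> 0" and L: "L \<ge> 1" and n: "n \<ge> 1" and p: "p \<ge> 1" and a: "a \<ge> 1"
  shows "(\<Sum>t\<in>{a..n}. (d t)\<^sup>2) / real n
     \<le> (C\<^sup>2 + 1 + C powr p) * (real L powr (min p 2) * real n powr (- 2 / max p 2))"
proof (cases "p \<le> 2")
  case True
  have "(\<Sum>t\<in>{a..n}. (d t)\<^sup>2) \<le> C powr (2 - p) * (real L * C powr p)"
    using d sum_powr True by (rule sum_sq_le_of_sum_powr_le_small_p)
  also have "\<dots> = C\<^sup>2 * real L"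
    using C by (cases "C = 0") (simp_all add: powr_add[symmetric] powr_numeral)
  also have "\<dots> \<le> (C\<^sup>2 + 1 + C powr p) * real L powr p"
    using L p powr_mono[of 1 p "real L"] by (intro mult_mono) auto
  finally show ?thesis
    using True n by (simp add: min_def max_def powr_minus_divide divide_right_mono)
next
  case False
  have "(\<Sum>t\<in>{a..n}. (d t)\<^sup>2) \<le> real n powr (1 - 2 / p) * (1 + real L * C powr p)"
    using d sum_powr False n a by (intro sum_sq_le_of_sum_powr_le_large_p) auto
  also have "real n powr (1 - 2 / p) = real n * real n powr (- 2 / p)"
    using powr_add[of "real n" 1 "- 2 / p"] by simp
  finally have "(\<Sum>t\<in>{a..n}. (d t)\<^sup>2) / real n \<le> real n powr (- 2 / p) * (1 + real L * C powr p)"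
    using n by (subst pos_divide_le_eq) (auto simp: mult_ac)
  also have "\<dots> \<le> real n powr (- 2 / p) * ((C\<^sup>2 + 1 + C powr p) * real L powr 2)"
  proof -
    have "1 + real L * C powr p \<le> real L * (1 + C powr p)"
      using L by (simp add: algebra_simps)
    also have "\<dots> \<le> (C\<^sup>2 + 1 + C powr p) * real L powr 2"
      using L by (subst mult.commute, intro mult_mono) (auto simp: powr_numeral power2_eq_square)
    finally show ?thesis by (rule mult_left_mono) simp
  qed
  finally show ?thesis
    using False by (simp add: min_def max_def mult_ac)
qed

lemma residue_class_eq_progression:
  fixes a c n L :: nat
  assumes c: "c < L" and n: "a + c \<le> n"
  shows "{t\<in>{a..n}. (t - a) mod L = c} = (\<lambda>j. a + c + j * L) ` {..(n - a - c) div L}"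
proof (intro set_eqI iffI)
  fix t assume t: "t \<in> {t\<in>{a..n}. (t - a) mod L = c}"
  define j where "j = (t - a) div L"
  have t_eq: "t = a + c + j * L"
    using t div_mult_mod_eq[of "t - a" L] by (auto simp: j_def algebra_simps)
  then have "a + c + j * L \<le> n"
    using t by simp
  then have "j * L \<le> n - a - c"
    by linarith
  then have "j \<le> (n - a - c) div L"
    using c by (simp add: less_eq_div_iff_mult_less_eq)
  with t_eq show "t \<in> (\<lambda>j. a + c + j * L) ` {..(n - a - c) div L}"
    by (intro image_eqI) auto
next
  fix t assume "t \<in> (\<lambda>j. a + c + j * L) ` {..(n - a - c) div L}"
  then obtain j where j: "j \<le> (n - a - c) div L" "t = a + c + j * L" by auto
  then have "j * L \<le> n - a - c"
    using c by (simp add: less_eq_div_iff_mult_less_eq)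
  then show "t \<in> {t\<in>{a..n}. (t - a) mod L = c}"
    using j c n by simp
qed

lemma sum_le_by_progressions:
  fixes g :: "nat \<Rightarrow> real"
  assumes L: "L \<ge> 1" and a: "a \<ge> L + 1" and W: "W \<ge> 0"
    and progression: "\<And>b k. 1 \<le> b \<Longrightarrow> b + k * L \<le> n \<Longrightarrow> (\<Sum>j<k. g (b + Suc j * L)) \<le> W"
  shows "(\<Sum>t\<in>{a..n}. g t) \<le> real L * W"
proof -
  have "(\<Sum>t\<in>{a..n}. g t) = (\<Sum>c<L. \<Sum>t\<in>{t\<in>{a..n}. (t - a) mod L = c}. g t)"
    using L by (intro sum.group[symmetric]) auto
  also have "\<dots> \<le> (\<Sum>c<L. W)"
  proof (rule sum_mono)
    fix c assume c: "c \<in> {..<L}"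
    show "(\<Sum>t\<in>{t\<in>{a..n}. (t - a) mod L = c}. g t) \<le> W"
    proof (cases "a + c \<le> n")
      case True
      define K where "K = (n - a - c) div L"
      have "inj_on (\<lambda>j. a + c + j * L) {..K}"
        using L by (auto simp: inj_on_def)
      moreover have "{t\<in>{a..n}. (t - a) mod L = c} = (\<lambda>j. a + c + j * L) ` {..K}"
        unfolding K_def using c True by (intro residue_class_eq_progression) auto
      ultimately have "(\<Sum>t\<in>{t\<in>{a..n}. (t - a) mod L = c}. g t) = (\<Sum>j\<le>K. g (a + c + j * L))"
        by (simp add: sum.reindex)
      also have "\<dots> = (\<Sum>j<Suc K. g ((a + c - L) + Suc j * L))"
        using a by (intro sum.cong) (auto simp: algebra_simps)
      also have "\<dots> \<le> W"
      proof (rule progression)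
        have "K * L \<le> n - a - c"
          unfolding K_def by (rule div_times_less_eq_dividend)
        then show "a + c - L + Suc K * L \<le> n"
          using a True by simp
      qed (use a in simp)
      finally show ?thesis .
    next
      case False
      have "{t\<in>{a..n}. (t - a) mod L = c} = {}"
      proof (intro equals0I)
        fix t assume "t \<in> {t\<in>{a..n}. (t - a) mod L = c}"
        then have "c \<le> t - a" "a \<le> t" "t \<le> n"
          using mod_less_eq_dividend[of "t - a" L] by auto
        then show False
          using False by linarith
      qed
      then show ?thesis
        using W by (metis sum.empty)
    qed
  qed
  finally show ?thesis by simp
qed

lemma lagged_increments_sq_sum_le:
  fixes m :: "real \<Rightarrow> 'b::real_normed_vector"
  assumes chain: "\<And>k v. (\<And>j. j < k \<Longrightarrow> v j < v (Suc j)) \<Longrightarrow> 0 < v 0 \<Longrightarrow> v k \<le> 1 \<Longrightarrow>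
        (\<Sum>j<k. norm (m (v (Suc j)) - m (v j)) powr p) \<le> C powr p"
    and C: "C \<ge> 0" and p: "p \<ge> 1" and L: "L \<ge> 1" and n: "n \<ge> 1" and a: "a \<ge> L + 1"
  shows "(\<Sum>t\<in>{a..n}. (norm (m (real t / real n) - m (real (t - L) / real n)))\<^sup>2) / real n
     \<le> (C\<^sup>2 + 1 + C powr p) * (real L powr (min p 2) * real n powr (- 2 / max p 2))"
proof -
  define d where "d t = norm (m (real t / real n) - m (real (t - L) / real n))" for t
  have progression: "(\<Sum>j<k. d (b + Suc j * L) powr p) \<le> C powr p"
    if "1 \<le> b" "b + k * L \<le> n" for b k
  proof -
    have "(\<Sum>j<k. d (b + Suc j * L) powr p)
        = (\<Sum>j<k. norm (m (real (b + Suc j * L) / real n) - m (real (b + j * L) / real n)) powr p)"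
      by (simp add: d_def add.assoc)
    also have "\<dots> \<le> C powr p"
    proof (rule chain)
      show "real (b + j * L) / real n < real (b + Suc j * L) / real n" for j
        using n L by (simp add: divide_strict_right_mono)
      show "0 < real (b + 0 * L) / real n"
        using that n by simp
      have "real (b + k * L) \<le> real n"
        using that(2) by (rule of_nat_mono)
      then show "real (b + k * L) / real n \<le> 1"
        using n by (simp add: divide_le_eq_1)
    qed
    finally show ?thesis .
  qed
  have d_le: "0 \<le> d t \<and> d t \<le> C" if "t \<in> {a..n}" for t
  proof (intro conjI leI notI)
    assume "C < d t"
    then have "C powr p < d t powr p"
      using C p by (intro powr_less_mono2) auto
    moreover have "(\<Sum>j<1. d (t - L + Suc j * L) powr p) \<le> C powr p"
      using that a by (intro progression) auto
    ultimately show False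
      using that a by simp
  qed (simp add: d_def)
  have "(\<Sum>t\<in>{a..n}. d t powr p) \<le> real L * C powr p"
    using L a by (intro sum_le_by_progressions progression) auto
  then show ?thesis
    unfolding d_def[symmetric] using d_le C L n p a
    by (intro sum_sq_div_le_of_sum_powr_le) auto
qed

section \<open>Quadratic Taylor remainders\<close>

lemma eventually_mean_in_nbhd:
  fixes Hn :: "nat \<Rightarrow> real \<Rightarrow> 'a \<Rightarrow> 'b::{banach, second_countable_topology}"
    and H :: "real \<Rightarrow> 'a \<Rightarrow> 'b"
  assumes M: "prob_space M" and Hn: "\<And>n u. Hn n u \<in> borel_measurable M"
    and H: "\<And>u. H u \<in> borel_measurable M" and q: "q > 1"
    and Hn_Lq: "\<And>n u. u \<in> {0..1} \<Longrightarrow> Lq_norm M q (Hn n u) \<noteq> \<infinity>"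
    and lim: "(\<lambda>n. SUP u\<in>{0..1}. Lq_norm M q (\<lambda>\<omega>. Hn n u \<omega> - H u \<omega>)) \<longlonglongrightarrow> 0"
    and S: "\<And>u. u \<in> {0..1} \<Longrightarrow> integral\<^sup>L M (H u) \<in> S" and \<delta>: "\<delta> > 0"
  shows "\<forall>\<^sub>F n in sequentially. \<forall>u\<in>{0..1}. integral\<^sup>L M (Hn n u) \<in> nbhd S \<delta>"
proof (cases \<delta>)
  case (real d)
  have "\<forall>\<^sub>F n in sequentially. (SUP u\<in>{0..1}. Lq_norm M q (\<lambda>\<omega>. Hn n u \<omega> - H u \<omega>)) < ennreal d"
    using real \<delta> by (intro order_tendstoD(2)[OF lim]) simp
  then show ?thesis
  proof (rule eventually_mono, intro ballI)
    fix n and u :: real assume sup_lt: "(SUP u\<in>{0..1}. Lq_norm M q (\<lambda>\<omega>. Hn n u \<omega> - H u \<omega>)) < ennreal d"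
      and u: "u \<in> {0..1}"
    then have lt: "Lq_norm M q (\<lambda>\<omega>. Hn n u \<omega> - H u \<omega>) < ennreal d"
      by (meson SUP_upper le_less_trans)
    have int_Hn: "integrable M (Hn n u)"
      using integrable_if_Lq_norm_finite[OF M Hn q Hn_Lq[OF u]] .
    have "integrable M (\<lambda>\<omega>. Hn n u \<omega> - H u \<omega>)"
      using Hn H lt by (intro integrable_if_Lq_norm_finite[OF M _ q]) (auto simp: top_unique)
    then have "integrable M (\<lambda>\<omega>. Hn n u \<omega> - (Hn n u \<omega> - H u \<omega>))"
      using int_Hn by (rule Bochner_Integration.integrable_diff[rotated])
    then have int_H: "integrable M (H u)"
      by simp
    have "ennreal (dist (integral\<^sup>L M (Hn n u)) (integral\<^sup>L M (H u))) < ennreal d"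
      unfolding dist_norm using norm_diff_integral_le_Lq_norm[OF M q int_Hn int_H] lt
      by (rule le_less_trans)
    then show "integral\<^sup>L M (Hn n u) \<in> nbhd S \<delta>"
      using S[OF u] real unfolding nbhd_def by (auto simp: ennreal_less_iff)
  qed
qed (use \<delta> S[of 0] in \<open>auto simp: nbhd_def\<close>)

lemma convex_nbhd:
  fixes S :: "'a::real_normed_vector set"
  assumes S: "convex S"
  shows "convex (nbhd S \<delta>)"
proof (rule convexI)
  fix x y :: 'a and u v :: real
  assume "x \<in> nbhd S \<delta>" "y \<in> nbhd S \<delta>" and uv: "0 \<le> u" "0 \<le> v" "u + v = 1"
  then obtain x' y' where x': "x' \<in> S" "ereal (dist x x') < \<delta>" and y': "y' \<in> S" "ereal (dist y y') < \<delta>"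
    unfolding nbhd_def by blast
  have "dist (u *\<^sub>R x + v *\<^sub>R y) (u *\<^sub>R x' + v *\<^sub>R y') = norm (u *\<^sub>R (x - x') + v *\<^sub>R (y - y'))"
    by (simp add: dist_norm algebra_simps)
  also have "\<dots> \<le> u * dist x x' + v * dist y y'"
    using uv by (intro order_trans[OF norm_triangle_ineq]) (simp add: dist_norm)
  finally have "ereal (dist (u *\<^sub>R x + v *\<^sub>R y) (u *\<^sub>R x' + v *\<^sub>R y')) < \<delta>"
    using x'(2) y'(2) uv by (cases \<delta>) (auto intro: le_less_trans convex_bound_lt)
  moreover have "u *\<^sub>R x' + v *\<^sub>R y' \<in> S"
    using S x'(1) y'(1) uv by (rule convexD)
  ultimately show "u *\<^sub>R x + v *\<^sub>R y \<in> nbhd S \<delta>"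
    unfolding nbhd_def by blast
qed

lemma abs_blinfun_quadratic_half_le:
  fixes F :: "'a::real_normed_vector \<Rightarrow>\<^sub>L ('a \<Rightarrow>\<^sub>L real)"
  shows "\<bar>blinfun_apply (blinfun_apply F (x - z)) (x - z) / 2\<bar> \<le> norm F * ((norm (x - y))\<^sup>2 + (norm (y - z))\<^sup>2)"
proof -
  have "\<bar>blinfun_apply (blinfun_apply F (x - z)) (x - z)\<bar> \<le> norm (blinfun_apply F (x - z)) * norm (x - z)"
    using norm_blinfun[of "blinfun_apply F (x - z)" "x - z"] by simp
  also have "\<dots> \<le> norm F * norm (x - z) * norm (x - z)"
    by (intro mult_right_mono norm_blinfun) simp
  also have "\<dots> \<le> norm F * (norm (x - y) + norm (y - z))\<^sup>2"
    using norm_diff_triangle_ineq[of x y y z]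
    by (simp add: power2_eq_square mult.assoc mult_left_mono mult_mono)
  also have "\<dots> \<le> norm F * (2 * ((norm (x - y))\<^sup>2 + (norm (y - z))\<^sup>2))"
    using sum_squares_bound[of "norm (x - y)" "norm (y - z)"]
    by (intro mult_left_mono) (auto simp: power2_eq_square algebra_simps)
  finally show ?thesis
    by (simp add: algebra_simps)
qed

lemma SUP_abs_partial_sums_nonneg:
  fixes T :: "nat \<Rightarrow> real"
  shows "0 \<le> (SUP u\<in>{0..1}. \<bar>1 / real n * (\<Sum>t\<in>{a..nat \<lfloor>real n * u\<rfloor>}. T t)\<bar>)"
proof (rule cSUP_upper2[where x = 0])
  have "nat \<lfloor>real n * u\<rfloor> \<le> n" if "u \<in> {0..1}" for u
    using that mult_left_le[of u "real n"] by auto linarith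
  then have "(\<lambda>u. \<bar>1 / real n * (\<Sum>t\<in>{a..nat \<lfloor>real n * u\<rfloor>}. T t)\<bar>) ` {0..1}
      \<subseteq> (\<lambda>k. \<bar>1 / real n * (\<Sum>t\<in>{a..k}. T t)\<bar>) ` {..n}"
    by auto
  then show "bdd_above ((\<lambda>u. \<bar>1 / real n * (\<Sum>t\<in>{a..nat \<lfloor>real n * u\<rfloor>}. T t)\<bar>) ` {0..1})"
    by (rule bdd_above_mono[OF bdd_above_finite[OF finite_imageI[OF finite_atMost]]])
qed auto

lemma SUP_abs_partial_sums_le:
  fixes T g :: "nat \<Rightarrow> real"
  assumes T: "\<And>t. t \<in> {a..n} \<Longrightarrow> \<bar>T t\<bar> \<le> g t"
  shows "(SUP u\<in>{0..1}. \<bar>1 / real n * (\<Sum>t\<in>{a..nat \<lfloor>real n * u\<rfloor>}. T t)\<bar>) \<le> (\<Sum>t\<in>{a..n}. g t) / real n"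
proof (rule cSUP_least)
  fix u :: real assume "u \<in> {0..1}"
  then have K: "nat \<lfloor>real n * u\<rfloor> \<le> n"
    using mult_left_le[of u "real n"] by auto linarith
  have "\<bar>\<Sum>t\<in>{a..nat \<lfloor>real n * u\<rfloor>}. T t\<bar> \<le> (\<Sum>t\<in>{a..nat \<lfloor>real n * u\<rfloor>}. g t)"
    using K T by (intro order_trans[OF sum_abs] sum_mono) auto
  also have "\<dots> \<le> (\<Sum>t\<in>{a..n}. g t)"
    using K order_trans[OF abs_ge_zero T] by (intro sum_mono2) auto
  finally show "\<bar>1 / real n * (\<Sum>t\<in>{a..nat \<lfloor>real n * u\<rfloor>}. T t)\<bar> \<le> (\<Sum>t\<in>{a..n}. g t) / real n"
    by (simp add: abs_mult divide_right_mono)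
qed simp

lemma sum_lagged_le:
  fixes g :: "nat \<Rightarrow> real"
  assumes "\<And>t. t \<in> {a..n} \<Longrightarrow> 0 \<le> g t"
  shows "(\<Sum>t\<in>{a + L..n}. g (t - L)) \<le> (\<Sum>t\<in>{a..n}. g t)"
proof -
  have "inj_on (\<lambda>t. t - L) {a + L..n}"
    by (auto simp: inj_on_def)
  then have "(\<Sum>t\<in>{a + L..n}. g (t - L)) = (\<Sum>t\<in>(\<lambda>t. t - L) ` {a + L..n}. g t)"
    by (simp add: sum.reindex)
  also have "\<dots> \<le> (\<Sum>t\<in>{a..n}. g t)"
    using assms by (intro sum_mono2) auto
  finally show ?thesis .
qed

lemma SUP_quadratic_remainder_le:
  fixes F :: "nat \<Rightarrow> 'a::real_normed_vector \<Rightarrow>\<^sub>L ('a \<Rightarrow>\<^sub>L real)" and m mhat :: "nat \<Rightarrow> 'a"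
  assumes F: "\<And>t. t \<in> {a + L..n} \<Longrightarrow> norm (F t) \<le> c" and c: "c \<ge> 0"
  shows "(SUP u\<in>{0..1}. \<bar>1 / real n * (\<Sum>t\<in>{a + L..nat \<lfloor>real n * u\<rfloor>}.
            blinfun_apply (blinfun_apply (F t) (m t - mhat (t - L))) (m t - mhat (t - L)) / 2)\<bar>)
    \<le> c * (\<Sum>t\<in>{a + L..n}. (norm (m t - m (t - L)))\<^sup>2) / real n
      + c * (\<Sum>t\<in>{a..n}. (norm (mhat t - m t))\<^sup>2) / real n"
proof -
  have "(SUP u\<in>{0..1}. \<bar>1 / real n * (\<Sum>t\<in>{a + L..nat \<lfloor>real n * u\<rfloor>}.
            blinfun_apply (blinfun_apply (F t) (m t - mhat (t - L))) (m t - mhat (t - L)) / 2)\<bar>)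
      \<le> (\<Sum>t\<in>{a + L..n}. c * ((norm (m t - m (t - L)))\<^sup>2 + (norm (m (t - L) - mhat (t - L)))\<^sup>2)) / real n"
  proof (rule SUP_abs_partial_sums_le)
    fix t assume "t \<in> {a + L..n}"
    then show "\<bar>blinfun_apply (blinfun_apply (F t) (m t - mhat (t - L))) (m t - mhat (t - L)) / 2\<bar>
        \<le> c * ((norm (m t - m (t - L)))\<^sup>2 + (norm (m (t - L) - mhat (t - L)))\<^sup>2)"
      using F c by (intro order_trans[OF abs_blinfun_quadratic_half_le[where y = "m (t - L)"]]
          mult_right_mono) auto
  qed
  also have "\<dots> \<le> c * (\<Sum>t\<in>{a + L..n}. (norm (m t - m (t - L)))\<^sup>2) / real n
      + c * (\<Sum>t\<in>{a..n}. (norm (mhat t - m t))\<^sup>2) / real n"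
  proof (cases "a + L \<le> n")
    case True
    have "(\<Sum>t\<in>{a + L..n}. (norm (m (t - L) - mhat (t - L)))\<^sup>2) \<le> (\<Sum>t\<in>{a..n}. (norm (mhat t - m t))\<^sup>2)"
      using sum_lagged_le[of a n "\<lambda>t. (norm (mhat t - m t))\<^sup>2" L] by (simp add: norm_minus_commute)
    then have "(\<Sum>t\<in>{a + L..n}. c * ((norm (m t - m (t - L)))\<^sup>2 + (norm (m (t - L) - mhat (t - L)))\<^sup>2))
        \<le> c * (\<Sum>t\<in>{a + L..n}. (norm (m t - m (t - L)))\<^sup>2) + c * (\<Sum>t\<in>{a..n}. (norm (mhat t - m t))\<^sup>2)"
      using c by (simp add: sum.distrib distrib_left sum_distrib_left[symmetric] mult_left_mono)
    then show ?thesis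
      by (simp add: add_divide_distrib[symmetric] divide_right_mono)
  qed (simp add: c sum_nonneg)
  finally show ?thesis .
qed

lemma measurable_comp_epsvec:
  assumes eps: "\<And>i. eps i \<in> borel_measurable M"
    and H: "(\<lambda>(u, e). H u e) \<in> borel_measurable (borel \<Otimes>\<^sub>M (\<Pi>\<^sub>M k\<in>UNIV. borel))"
  shows "(\<lambda>\<omega>. H u (epsvec eps t \<omega>)) \<in> borel_measurable M"
proof -
  have "epsvec eps t \<in> measurable M (\<Pi>\<^sub>M k\<in>UNIV. borel)"
    unfolding epsvec_def by (rule measurable_PiM_single') (auto intro: eps)
  then have "(\<lambda>\<omega>. (u, epsvec eps t \<omega>)) \<in> measurable M (borel \<Otimes>\<^sub>M (\<Pi>\<^sub>M k\<in>UNIV. borel))"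
    by measurable
  from measurable_compose[OF this H] show ?thesis
    by simp
qed

section \<open>Stochastic order symbols\<close>

lemma small_oP_cmult_divide:
  assumes X: "small_oP M X r" and c: "c \<ge> 0" and g: "\<And>n. g n \<ge> 0"
  shows "small_oP M (\<lambda>n \<omega>. c * X n \<omega> / g n) (\<lambda>n. r n / g n)"
  unfolding small_oP_def
proof (intro allI impI)
  fix e \<eta> :: real assume e: "e > 0" and \<eta>: "\<eta> > 0"
  have "e / (c + 1) > 0"
    using e c by simp
  with X \<eta> have event: "\<forall>\<^sub>F n in sequentially. \<exists>A\<in>sets M. measure M A < \<eta> \<and>
      {\<omega>\<in>space M. \<bar>X n \<omega>\<bar> > e / (c + 1) * r n} \<subseteq> A"
    unfolding small_oP_def by blast
  have sub: "{\<omega>\<in>space M. \<bar>c * X n \<omega> / g n\<bar> > e * (r n / g n)}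
      \<subseteq> {\<omega>\<in>space M. \<bar>X n \<omega>\<bar> > e / (c + 1) * r n}" for n
  proof safe
    fix \<omega> assume "\<bar>c * X n \<omega> / g n\<bar> > e * (r n / g n)"
    then have "c * \<bar>X n \<omega>\<bar> > e * r n"
      using g[of n] c by (cases "g n = 0") (auto simp: abs_mult divide_less_cancel)
    then have "(c + 1) * \<bar>X n \<omega>\<bar> > e * r n"
      using abs_ge_zero[of "X n \<omega>"] by (simp add: distrib_right)
    then show "\<bar>X n \<omega>\<bar> > e / (c + 1) * r n"
      using c by (simp add: field_simps)
  qed
  show "\<forall>\<^sub>F n in sequentially. \<exists>A\<in>sets M. measure M A < \<eta> \<and>
      {\<omega>\<in>space M. \<bar>c * X n \<omega> / g n\<bar> > e * (r n / g n)} \<subseteq> A"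
    using event by (rule eventually_mono) (use sub[THEN order_trans] in blast)
qed

lemma small_oP_if_bounded_on_events:
  assumes M: "prob_space M" and E: "(\<lambda>n. measure M (E n)) \<longlonglongrightarrow> 1"
    and B: "small_oP M B r" and bound: "\<forall>\<^sub>F n in sequentially. \<forall>\<omega>\<in>E n. \<bar>Y n \<omega>\<bar> \<le> \<bar>B n \<omega>\<bar>"
  shows "small_oP M Y r"
  unfolding small_oP_def
proof (intro allI impI)
  interpret prob_space M by fact
  fix e \<eta> :: real assume e: "e > 0" and \<eta>: "\<eta> > 0"
  \<comment> \<open>a set of positive measure is measurable, since measure gives the junk value 0 otherwise\<close>
  have "E n \<in> events" if "measure M (E n) > 0" for n
    using that measure_notin_sets[of "E n" M] by auto
  then have "\<forall>\<^sub>F n in sequentially. E n \<in> events"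
    using order_tendstoD(1)[OF E, of 0] by (auto elim: eventually_mono)
  moreover have "\<forall>\<^sub>F n in sequentially. measure M (E n) > 1 - \<eta> / 2"
    using E \<eta> by (intro order_tendstoD) auto
  moreover have "\<eta> / 2 > 0"
    using \<eta> by simp
  with B e have "\<forall>\<^sub>F n in sequentially. \<exists>A\<in>sets M. measure M A < \<eta> / 2 \<and>
      {\<omega>\<in>space M. \<bar>B n \<omega>\<bar> > e * r n} \<subseteq> A"
    unfolding small_oP_def by blast
  ultimately show "\<forall>\<^sub>F n in sequentially. \<exists>A\<in>sets M. measure M A < \<eta> \<and>
      {\<omega>\<in>space M. \<bar>Y n \<omega>\<bar> > e * r n} \<subseteq> A"
    using bound
  proof eventually_elim
    case (elim n)
    then obtain A where A: "A \<in> sets M" "measure M A < \<eta> / 2"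
      "{\<omega>\<in>space M. \<bar>B n \<omega>\<bar> > e * r n} \<subseteq> A" by blast
    note En = elim(1) and elim = elim(2,4)
    have "measure M (A \<union> (space M - E n)) \<le> measure M A + measure M (space M - E n)"
      using A En by (intro measure_Un_le) auto
    also have "\<dots> < \<eta>"
      using A elim(1) prob_compl[OF En] by simp
    finally have "measure M (A \<union> (space M - E n)) < \<eta>" .
    moreover have "{\<omega>\<in>space M. \<bar>Y n \<omega>\<bar> > e * r n} \<subseteq> A \<union> (space M - E n)"
      using A(3) elim(2) by force
    ultimately show ?case
      using A En by blast
  qed
qed

lemma big_OP_if_bounded:
  assumes "\<forall>\<^sub>F n in sequentially. \<forall>\<omega>\<in>space M. \<bar>Z n \<omega>\<bar> \<le> K * s n"
  shows "big_OP M Z s"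
  unfolding big_OP_def
proof (intro allI impI exI)
  fix \<eta> :: real assume "\<eta> > 0"
  with assms show "\<forall>\<^sub>F n in sequentially. \<exists>A\<in>sets M. measure M A < \<eta> \<and>
      {\<omega>\<in>space M. \<bar>Z n \<omega>\<bar> > K * s n} \<subseteq> A"
    by (elim eventually_mono) (intro bexI[of _ "{}"], auto simp: not_less)
qed

lemma oP_plus_OP_if_bounded_on_events:
  assumes M: "prob_space M" and E: "(\<lambda>n. measure M (E n)) \<longlonglongrightarrow> 1"
    and X: "\<And>n \<omega>. X n \<omega> \<ge> 0" and A: "\<And>n. A n \<ge> 0" and A_le: "\<forall>\<^sub>F n in sequentially. A n \<le> K * s n"
    and B: "small_oP M B r" and bound: "\<forall>\<^sub>F n in sequentially. \<forall>\<omega>\<in>E n. X n \<omega> \<le> A n + B n \<omega>"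
  shows "oP_plus_OP M X r s"
  unfolding oP_plus_OP_def
proof (intro exI conjI)
  show "\<forall>n. \<forall>\<omega>\<in>space M. X n \<omega> = (X n \<omega> - min (X n \<omega>) (A n)) + min (X n \<omega>) (A n)"
    by simp
  show "small_oP M (\<lambda>n \<omega>. X n \<omega> - min (X n \<omega>) (A n)) r"
    using bound by (intro small_oP_if_bounded_on_events[OF M E B]) (auto elim!: eventually_mono)
  show "big_OP M (\<lambda>n \<omega>. min (X n \<omega>) (A n)) s"
    using A_le by (intro big_OP_if_bounded[where K = K]) (auto simp: X A elim!: eventually_mono)
qed

lemma small_oP_add:
  assumes M: "prob_space M" and Y: "small_oP M Y r" and Z: "small_oP M Z r"
    and X: "\<And>n \<omega>. \<omega> \<in> space M \<Longrightarrow> X n \<omega> = Y n \<omega> + Z n \<omega>"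
  shows "small_oP M X r"
  unfolding small_oP_def
proof (intro allI impI)
  interpret prob_space M by fact
  fix e \<eta> :: real assume e: "e > 0" and \<eta>: "\<eta> > 0"
  have "e / 2 > 0" "\<eta> / 2 > 0"
    using e \<eta> by simp_all
  with Y Z have "\<forall>\<^sub>F n in sequentially. \<exists>A\<in>sets M. measure M A < \<eta> / 2 \<and> {\<omega>\<in>space M. \<bar>Y n \<omega>\<bar> > e / 2 * r n} \<subseteq> A"
    "\<forall>\<^sub>F n in sequentially. \<exists>A\<in>sets M. measure M A < \<eta> / 2 \<and> {\<omega>\<in>space M. \<bar>Z n \<omega>\<bar> > e / 2 * r n} \<subseteq> A"
    unfolding small_oP_def by blast+
  then show "\<forall>\<^sub>F n in sequentially. \<exists>A\<in>sets M. measure M A < \<eta> \<and> {\<omega>\<in>space M. \<bar>X n \<omega>\<bar> > e * r n} \<subseteq> A"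
  proof eventually_elim
    case (elim n)
    then obtain A1 A2 where A: "A1 \<in> events" "measure M A1 < \<eta> / 2" "{\<omega>\<in>space M. \<bar>Y n \<omega>\<bar> > e / 2 * r n} \<subseteq> A1"
      "A2 \<in> events" "measure M A2 < \<eta> / 2" "{\<omega>\<in>space M. \<bar>Z n \<omega>\<bar> > e / 2 * r n} \<subseteq> A2"
      by blast
    have "measure M (A1 \<union> A2) < \<eta>"
      using measure_Un_le[of A1 M A2] A by simp
    moreover have "{\<omega>\<in>space M. \<bar>X n \<omega>\<bar> > e * r n} \<subseteq> A1 \<union> A2"
      using A(3,6) X by force
    ultimately show ?case
      using A by blast
  qed
qed

lemma small_oP_if_big_OP_faster:
  assumes Z: "big_OP M Z s" and lim: "(\<lambda>n. s n / r n) \<longlonglongrightarrow> 0"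
    and r: "\<forall>\<^sub>F n in sequentially. r n > 0" and s: "\<forall>\<^sub>F n in sequentially. s n \<ge> 0"
  shows "small_oP M Z r"
  unfolding small_oP_def
proof (intro allI impI)
  fix e \<eta> :: real assume e: "e > 0" and \<eta>: "\<eta> > 0"
  obtain K where K: "\<forall>\<^sub>F n in sequentially. \<exists>A\<in>sets M. measure M A < \<eta> \<and> {\<omega>\<in>space M. \<bar>Z n \<omega>\<bar> > K * s n} \<subseteq> A"
    using Z \<eta> unfolding big_OP_def by blast
  have "\<forall>\<^sub>F n in sequentially. s n / r n < e / (\<bar>K\<bar> + 1)"
    using e by (intro order_tendstoD(2)[OF lim]) (simp add: add_pos_nonneg)
  then have "\<forall>\<^sub>F n in sequentially. K * s n \<le> e * r n"
    using r s
  proof eventually_elim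
    case (elim n)
    then have "(\<bar>K\<bar> + 1) * s n \<le> e * r n"
      by (simp add: field_simps add_pos_nonneg)
    moreover have "K * s n \<le> (\<bar>K\<bar> + 1) * s n"
      using elim by (intro mult_right_mono) auto
    ultimately show ?case by linarith
  qed
  with K show "\<forall>\<^sub>F n in sequentially. \<exists>A\<in>sets M. measure M A < \<eta> \<and> {\<omega>\<in>space M. \<bar>Z n \<omega>\<bar> > e * r n} \<subseteq> A"
    by eventually_elim fastforce
qed

lemma small_oP_if_oP_plus_OP_faster:
  assumes "prob_space M" "oP_plus_OP M X r s" "(\<lambda>n. s n / r n) \<longlonglongrightarrow> 0"
    "\<forall>\<^sub>F n in sequentially. r n > 0" "\<forall>\<^sub>F n in sequentially. s n \<ge> 0"
  shows "small_oP M X r"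
  using assms small_oP_if_big_OP_faster[OF _ assms(3-5)] small_oP_add[OF assms(1)]
  unfolding oP_plus_OP_def by metis

lemma rate_ratio_tendsto_zero_ge2:
  fixes L :: "nat \<Rightarrow> nat"
  assumes p: "p \<ge> 2" and lim: "(\<lambda>n. real (L n) / real n powr (1 / p - 1 / 4)) \<longlonglongrightarrow> 0"
  shows "(\<lambda>n. (real (L n) powr (min p 2) * real n powr (- 2 / max p 2)) / (1 / sqrt (real n))) \<longlonglongrightarrow> 0"
proof -
  have "(\<lambda>n. (real (L n) / real n powr (1 / p - 1 / 4))\<^sup>2) \<longlonglongrightarrow> 0\<^sup>2"
    by (intro tendsto_power lim)
  then have l2: "(\<lambda>n. (real (L n) / real n powr (1 / p - 1 / 4))\<^sup>2) \<longlonglongrightarrow> 0" by simp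
  show ?thesis
  proof (rule Lim_transform_eventually[OF l2])
    show "\<forall>\<^sub>F n in sequentially. (real (L n) / real n powr (1 / p - 1 / 4))\<^sup>2 =
      (real (L n) powr (min p 2) * real n powr (- 2 / max p 2)) / (1 / sqrt (real n))"
      using eventually_gt_at_top[of "0::nat"]
    proof eventually_elim
      case (elim n)
      have np: "real n > 0" using elim by simp
      have mm: "min p 2 = 2" "max p 2 = p" using p by auto
      have Lp: "real (L n) powr 2 = (real (L n))\<^sup>2"
        by (cases "L n = 0") (simp_all add: powr_numeral)
      have sq: "sqrt (real n) = real n powr (1/2)" using np by (simp add: powr_half_sqrt)
      have d: "(real n powr (1 / p - 1 / 4))\<^sup>2 = real n powr (2 / p - 1 / 2)"
        using np by (simp add: powr_numeral[symmetric] powr_powr algebra_simps)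
      have e: "real n powr (- 2 / p) * real n powr (1/2) = 1 / real n powr (2 / p - 1 / 2)"
        using np by (simp add: powr_add[symmetric] powr_minus_divide[symmetric] algebra_simps)
      have "(real (L n) powr (min p 2) * real n powr (- 2 / max p 2)) / (1 / sqrt (real n))
          = (real (L n))\<^sup>2 * (real n powr (- 2 / p) * real n powr (1/2))"
        unfolding mm Lp sq by simp
      also have "\<dots> = (real (L n))\<^sup>2 / (real n powr (1 / p - 1 / 4))\<^sup>2" unfolding e d by simp
      finally show ?case by (simp add: power_divide)
    qed
  qed
qed

lemma rate_ratio_tendsto_zero_lt2:
  fixes L :: "nat \<Rightarrow> nat"
  assumes p: "p < 2" "p \<ge> 1" and lim: "(\<lambda>n. real (L n) / real n powr (1 / (2 * p))) \<longlonglongrightarrow> 0"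
  shows "(\<lambda>n. (real (L n) powr (min p 2) * real n powr (- 2 / max p 2)) / (1 / sqrt (real n))) \<longlonglongrightarrow> 0"
proof -
  have l2: "(\<lambda>n. (real (L n) / real n powr (1 / (2 * p))) powr p) \<longlonglongrightarrow> 0"
    using p by (intro tendsto_zero_powrI[OF lim]) auto
  show ?thesis
  proof (rule Lim_transform_eventually[OF l2])
    show "\<forall>\<^sub>F n in sequentially. (real (L n) / real n powr (1 / (2 * p))) powr p =
      (real (L n) powr (min p 2) * real n powr (- 2 / max p 2)) / (1 / sqrt (real n))"
      using eventually_gt_at_top[of "0::nat"]
    proof eventually_elim
      case (elim n)
      have np: "real n > 0" using elim by simp
      have mm: "min p 2 = p" "max p 2 = 2" using p by auto
      have sq: "sqrt (real n) = real n powr (1/2)" using np by (simp add: powr_half_sqrt)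
      have d: "(real n powr (1 / (2 * p))) powr p = real n powr (1 / 2)"
        using np p by (simp add: powr_powr)
      have e: "real n powr (- 1) * real n powr (1/2) = 1 / real n powr (1 / 2)"
        by (subst powr_add[symmetric]) (simp add: powr_minus_divide)
      have "(real (L n) powr (min p 2) * real n powr (- 2 / max p 2)) / (1 / sqrt (real n))
          = real (L n) powr p * (real n powr (- 1) * real n powr (1/2))"
        unfolding mm sq by simp
      also have "\<dots> = real (L n) powr p / (real n powr (1 / (2 * p))) powr p" unfolding e d by simp
      finally show ?case using np by (simp add: powr_divide)
    qed
  qed
qed

section \<open>The plug-in setting\<close>

locale plugin_remainder =
  fixes M :: "'w measure"
    and eps :: "int \<Rightarrow> 'w \<Rightarrow> real"
    and Gn :: "nat \<Rightarrow> real \<Rightarrow> (nat \<Rightarrow> real) \<Rightarrow> 'd::euclidean_space"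
    and G :: "real \<Rightarrow> (nat \<Rightarrow> real) \<Rightarrow> 'd"
    and f'' :: "'d \<Rightarrow> ('d \<Rightarrow>\<^sub>L ('d \<Rightarrow>\<^sub>L real))"
    and muhat mutilde :: "nat \<Rightarrow> nat \<Rightarrow> 'w \<Rightarrow> 'd"
    and \<tau> L :: "nat \<Rightarrow> nat"
    and p q C_G C_f :: real
    and \<delta> :: ereal
  assumes prob: "prob_space M"
    and eps_rv: "\<And>i. eps i \<in> borel_measurable M"
    and Gn_meas: "\<And>n. (\<lambda>(u, e). Gn n u e) \<in> borel_measurable (borel \<Otimes>\<^sub>M (\<Pi>\<^sub>M k\<in>UNIV. borel))"
    and G_meas: "(\<lambda>(u, e). G u e) \<in> borel_measurable (borel \<Otimes>\<^sub>M (\<Pi>\<^sub>M k\<in>UNIV. borel))"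
    and q: "q > 1" and p: "p \<ge> 1"
    and A1: "(\<lambda>n. SUP u\<in>{0..1}. Lq_norm M q (\<lambda>\<omega>. Gn n u (epsvec eps 0 \<omega>) - G u (epsvec eps 0 \<omega>)))
               \<longlonglongrightarrow> 0"
    and A2: "(SUP n. SUP u\<in>{0..1}. Lq_norm M q (\<lambda>\<omega>. Gn n u (epsvec eps 0 \<omega>)))
             + (SUP n. pvar M q p (\<lambda>u \<omega>. Gn n u (epsvec eps 0 \<omega>))) \<le> ennreal C_G"
    and delta: "\<delta> > 0"
    and hessian_bound: "\<And>x. x \<in> nbhd (convex hull ((\<lambda>u. integral\<^sup>L M (\<lambda>\<omega>. G u (epsvec eps 0 \<omega>))) ` {0..1})) \<delta>
               \<Longrightarrow> norm (f'' x) \<le> C_f"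
    and tau: "\<And>n. \<tau> n \<ge> 1"
    and L: "filterlim L at_top sequentially"
    and A5: "small_oP M (\<lambda>n \<omega>. \<Sum>t\<in>{\<tau> n..n}.
               (norm (muhat t n \<omega> - integral\<^sup>L M (\<lambda>\<omega>'. Gn n (real t / real n) (epsvec eps 0 \<omega>'))))\<^sup>2)
               (\<lambda>n. sqrt (real n))"
    and A6: "(\<lambda>n. measure M {\<omega>\<in>space M. \<forall>t\<in>{\<tau> n..n}.
               muhat t n \<omega> \<in> nbhd (convex hull ((\<lambda>u. integral\<^sup>L M (\<lambda>\<omega>. G u (epsvec eps 0 \<omega>))) ` {0..1})) \<delta>})
               \<longlonglongrightarrow> 1"
    and mutilde: "\<And>n t \<omega>. \<omega> \<in> space M \<Longrightarrow> \<tau> n + L n \<le> t \<Longrightarrow> t \<le> n \<Longrightarrow>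
               mutilde t n \<omega> \<in> closed_segment (muhat (t - L n) n \<omega>)
                 (integral\<^sup>L M (\<lambda>\<omega>'. Gn n (real t / real n) (epsvec eps 0 \<omega>')))"
begin

abbreviation mean :: "nat \<Rightarrow> real \<Rightarrow> 'd" where
  "mean n u \<equiv> integral\<^sup>L M (\<lambda>\<omega>. Gn n u (epsvec eps 0 \<omega>))"

abbreviation mean_hull :: "'d set" where
  "mean_hull \<equiv> convex hull ((\<lambda>u. integral\<^sup>L M (\<lambda>\<omega>. G u (epsvec eps 0 \<omega>))) ` {0..1})"

abbreviation remainder :: "nat \<Rightarrow> real \<Rightarrow> 'w \<Rightarrow> real" where
  "remainder n u \<omega> \<equiv> 1 / real n * (\<Sum>t\<in>{\<tau> n + L n..nat \<lfloor>real n * u\<rfloor>}.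
     blinfun_apply (blinfun_apply (f'' (mutilde t n \<omega>)) (mean n (real t / real n) - muhat (t - L n) n \<omega>))
       (mean n (real t / real n) - muhat (t - L n) n \<omega>) / 2)"

abbreviation lag_sum :: "nat \<Rightarrow> real" where
  "lag_sum n \<equiv> \<Sum>t\<in>{\<tau> n + L n..n}. (norm (mean n (real t / real n) - mean n (real (t - L n) / real n)))\<^sup>2"

abbreviation error_sum :: "nat \<Rightarrow> 'w \<Rightarrow> real" where
  "error_sum n \<omega> \<equiv> \<Sum>t\<in>{\<tau> n..n}. (norm (muhat t n \<omega> - mean n (real t / real n)))\<^sup>2"

abbreviation rate :: "nat \<Rightarrow> real" where
  "rate n \<equiv> real (L n) powr (min p 2) * real n powr (- 2 / max p 2)"

abbreviation CG :: real where "CG \<equiv> max C_G 0"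

abbreviation Cf :: real where "Cf \<equiv> max C_f 0"

lemma Gn_measurable: "(\<lambda>\<omega>. Gn n u (epsvec eps 0 \<omega>)) \<in> borel_measurable M"
  by (rule measurable_comp_epsvec[OF eps_rv Gn_meas])

lemma G_measurable: "(\<lambda>\<omega>. G u (epsvec eps 0 \<omega>)) \<in> borel_measurable M"
  by (rule measurable_comp_epsvec[OF eps_rv G_meas])

lemma Lq_norm_Gn_le:
  assumes "u \<in> {0..1}"
  shows "Lq_norm M q (\<lambda>\<omega>. Gn n u (epsvec eps 0 \<omega>)) \<le> ennreal CG"
proof -
  have "Lq_norm M q (\<lambda>\<omega>. Gn n u (epsvec eps 0 \<omega>))
      \<le> (SUP n. SUP u\<in>{0..1}. Lq_norm M q (\<lambda>\<omega>. Gn n u (epsvec eps 0 \<omega>)))"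
    by (rule SUP_upper2[OF UNIV_I], rule SUP_upper[OF assms])
  also have "\<dots> \<le> ennreal C_G"
    by (rule order_trans[OF add_increasing2 A2]) simp_all
  also have "\<dots> \<le> ennreal CG"
    by (rule ennreal_leI) simp
  finally show ?thesis .
qed

lemma Lq_norm_Gn_finite: "u \<in> {0..1} \<Longrightarrow> Lq_norm M q (\<lambda>\<omega>. Gn n u (epsvec eps 0 \<omega>)) \<noteq> \<infinity>"
  using Lq_norm_Gn_le[of u n] by (auto simp: top_unique)

lemma pvar_Gn_le: "pvar M q p (\<lambda>u \<omega>. Gn n u (epsvec eps 0 \<omega>)) \<le> ennreal CG"
proof -
  have "pvar M q p (\<lambda>u \<omega>. Gn n u (epsvec eps 0 \<omega>)) \<le> (SUP n. pvar M q p (\<lambda>u \<omega>. Gn n u (epsvec eps 0 \<omega>)))"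
    by (rule SUP_upper) simp
  also have "\<dots> \<le> ennreal C_G"
    by (rule order_trans[OF add_increasing A2]) simp_all
  also have "\<dots> \<le> ennreal CG"
    by (rule ennreal_leI) simp
  finally show ?thesis .
qed

lemma lag_sum_le:
  assumes "n \<ge> 1" "L n \<ge> 1"
  shows "lag_sum n / real n \<le> (CG\<^sup>2 + 1 + CG powr p) * rate n"
  using assms tau[of n] p
  by (intro lagged_increments_sq_sum_le mean_increments_chain_sum_le[OF prob Gn_measurable q
        Lq_norm_Gn_finite pvar_Gn_le]) auto

lemma eventually_mean_in_nbhd_hull: "\<forall>\<^sub>F n in sequentially. \<forall>u\<in>{0..1}. mean n u \<in> nbhd mean_hull \<delta>"
  using A1 delta
  by (intro eventually_mean_in_nbhd[OF prob Gn_measurable G_measurable q Lq_norm_Gn_finite])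
    (auto intro: hull_inc)

lemma norm_hessian_mutilde_le:
  assumes n: "\<forall>u\<in>{0..1}. mean n u \<in> nbhd mean_hull \<delta>"
    and \<omega>: "\<omega> \<in> space M" "\<forall>t\<in>{\<tau> n..n}. muhat t n \<omega> \<in> nbhd mean_hull \<delta>"
    and t: "t \<in> {\<tau> n + L n..n}"
  shows "norm (f'' (mutilde t n \<omega>)) \<le> Cf"
proof -
  have "t - L n \<in> {\<tau> n..n}" "real t / real n \<in> {0..1}"
    using t by (auto simp: divide_le_eq_1)
  then have "closed_segment (muhat (t - L n) n \<omega>) (mean n (real t / real n)) \<subseteq> nbhd mean_hull \<delta>"
    using n \<omega> by (intro closed_segment_subset convex_nbhd) auto
  moreover have "mutilde t n \<omega> \<in> closed_segment (muhat (t - L n) n \<omega>) (mean n (real t / real n))"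
    using \<omega> t by (intro mutilde) auto
  ultimately show ?thesis
    using hessian_bound by fastforce
qed

lemma eventually_SUP_remainder_le:
  "\<forall>\<^sub>F n in sequentially. \<forall>\<omega>\<in>{\<omega>\<in>space M. \<forall>t\<in>{\<tau> n..n}. muhat t n \<omega> \<in> nbhd mean_hull \<delta>}.
     (SUP u\<in>{0..1}. \<bar>remainder n u \<omega>\<bar>) \<le> Cf * lag_sum n / real n + Cf * error_sum n \<omega> / real n"
  using eventually_mean_in_nbhd_hull
proof (rule eventually_mono, safe)
  fix n \<omega> assume "\<forall>u\<in>{0..1}. mean n u \<in> nbhd mean_hull \<delta>" "\<omega> \<in> space M"
    "\<forall>t\<in>{\<tau> n..n}. muhat t n \<omega> \<in> nbhd mean_hull \<delta>"
  then show "(SUP u\<in>{0..1}. \<bar>remainder n u \<omega>\<bar>) \<le> Cf * lag_sum n / real n + Cf * error_sum n \<omega> / real n"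
    by (intro SUP_quadratic_remainder_le[where m = "\<lambda>t. mean n (real t / real n)"
          and mhat = "\<lambda>t. muhat t n \<omega>" and F = "\<lambda>t. f'' (mutilde t n \<omega>)"] norm_hessian_mutilde_le) auto
qed

lemma SUP_remainder_decomposition:
  "oP_plus_OP M (\<lambda>n \<omega>. SUP u\<in>{0..1}. \<bar>remainder n u \<omega>\<bar>) (\<lambda>n. 1 / sqrt (real n)) rate"
proof (rule oP_plus_OP_if_bounded_on_events[OF prob A6 _ _ _ _ eventually_SUP_remainder_le])
  show "small_oP M (\<lambda>n \<omega>. Cf * error_sum n \<omega> / real n) (\<lambda>n. 1 / sqrt (real n))"
    using small_oP_cmult_divide[OF A5, of Cf real] by (simp add: sqrt_divide_self_eq inverse_eq_divide)
  have "\<forall>\<^sub>F n in sequentially. L n \<ge> 1"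
    using L by (simp add: filterlim_at_top)
  then show "\<forall>\<^sub>F n in sequentially. Cf * lag_sum n / real n \<le> Cf * (CG\<^sup>2 + 1 + CG powr p) * rate n"
    using eventually_ge_at_top[of 1]
  proof eventually_elim
    case (elim n)
    then have "Cf * (lag_sum n / real n) \<le> Cf * ((CG\<^sup>2 + 1 + CG powr p) * rate n)"
      by (intro mult_left_mono lag_sum_le) auto
    then show ?case
      by (simp add: mult.assoc)
  qed
  show "0 \<le> (SUP u\<in>{0..1}. \<bar>remainder n u \<omega>\<bar>)" for n \<omega>
    by (rule SUP_abs_partial_sums_nonneg)
  show "0 \<le> Cf * lag_sum n / real n" for n
    by (intro divide_nonneg_nonneg mult_nonneg_nonneg sum_nonneg) auto
qed

end

theorem lemmaC5:
  fixes M :: "'w measure"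
    and eps :: "int \<Rightarrow> 'w \<Rightarrow> real"
    and Gn :: "nat \<Rightarrow> real \<Rightarrow> (nat \<Rightarrow> real) \<Rightarrow> 'd::euclidean_space"
    and G :: "real \<Rightarrow> (nat \<Rightarrow> real) \<Rightarrow> 'd"
    and f :: "'d \<Rightarrow> real"
    and f' :: "'d \<Rightarrow> ('d \<Rightarrow>\<^sub>L real)"
    and f'' :: "'d \<Rightarrow> ('d \<Rightarrow>\<^sub>L ('d \<Rightarrow>\<^sub>L real))"
    and muhat :: "nat \<Rightarrow> nat \<Rightarrow> 'w \<Rightarrow> 'd"
    and mutilde :: "nat \<Rightarrow> nat \<Rightarrow> 'w \<Rightarrow> 'd"
    and \<tau> L :: "nat \<Rightarrow> nat"
    and p q C_G C_f :: real
    and \<delta> :: ereal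
  defines "mun \<equiv> (\<lambda>n u. integral\<^sup>L M (\<lambda>\<omega>. Gn n u (epsvec eps 0 \<omega>)))"
    and "Mset \<equiv> convex hull ((\<lambda>u. integral\<^sup>L M (\<lambda>\<omega>. G u (epsvec eps 0 \<omega>))) ` {0..1})"
    and "I2 \<equiv> (\<lambda>n u \<omega>. (1 / real n) * (\<Sum>t\<in>{\<tau> n + L n..nat \<lfloor>real n * u\<rfloor>}.
              blinfun_apply (blinfun_apply (f'' (mutilde t n \<omega>))
                  (integral\<^sup>L M (\<lambda>\<omega>'. Gn n (real t / real n) (epsvec eps 0 \<omega>')) - muhat (t - L n) n \<omega>))
                (integral\<^sup>L M (\<lambda>\<omega>'. Gn n (real t / real n) (epsvec eps 0 \<omega>')) - muhat (t - L n) n \<omega>) / 2))"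
  assumes M: "prob_space M"
    and eps_rv: "\<And>i. eps i \<in> borel_measurable M"
    and eps_indep: "prob_space.indep_vars M (\<lambda>_. borel) eps UNIV"
    and eps_id: "\<And>i. distr M borel (eps i) = distr M borel (eps 0)"
    and Gn_meas: "\<And>n. (\<lambda>(u, e). Gn n u e) \<in> borel_measurable (borel \<Otimes>\<^sub>M (\<Pi>\<^sub>M k\<in>UNIV. borel))"
    and G_meas: "(\<lambda>(u, e). G u e) \<in> borel_measurable (borel \<Otimes>\<^sub>M (\<Pi>\<^sub>M k\<in>UNIV. borel))"
    and q: "q > 2" and p: "p \<ge> 1"
    and A1: "(\<lambda>n. SUP u\<in>{0..1}. Lq_norm M q (\<lambda>\<omega>. Gn n u (epsvec eps 0 \<omega>) - G u (epsvec eps 0 \<omega>)))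
               \<longlonglongrightarrow> 0"
    and A2: "(SUP n. SUP u\<in>{0..1}. Lq_norm M q (\<lambda>\<omega>. Gn n u (epsvec eps 0 \<omega>)))
             + (SUP n. pvar M q p (\<lambda>u \<omega>. Gn n u (epsvec eps 0 \<omega>))) \<le> ennreal C_G"
    and delta: "\<delta> > 0"
    and f_deriv: "\<And>x. (f has_derivative blinfun_apply (f' x)) (at x)"
    and f'_deriv: "\<And>x. (f' has_derivative blinfun_apply (f'' x)) (at x)"
    and A4: "\<And>x. x \<in> nbhd Mset \<delta> \<Longrightarrow> \<bar>f x\<bar> + norm (f' x) + norm (f'' x) \<le> C_f"
    and muhat_meas: "\<And>t n. muhat t n \<in> borel_measurable (past_sigma M eps (int t))"
    and tau: "\<And>n. \<tau> n \<ge> 1"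
    and L: "filterlim L at_top sequentially"
    and A5: "small_oP M (\<lambda>n \<omega>. \<Sum>t\<in>{\<tau> n..n}. (norm (muhat t n \<omega> - mun n (real t / real n)))\<^sup>2)
               (\<lambda>n. sqrt (real n))"
    and A6: "(\<lambda>n. measure M {\<omega>\<in>space M. \<forall>t\<in>{\<tau> n..n}. muhat t n \<omega> \<in> nbhd Mset \<delta>}) \<longlonglongrightarrow> 1"
    and mutilde: "\<And>n t \<omega>. \<omega> \<in> space M \<Longrightarrow> \<tau> n + L n \<le> t \<Longrightarrow> t \<le> n \<Longrightarrow>
               mutilde t n \<omega> \<in> closed_segment (muhat (t - L n) n \<omega>) (mun n (real t / real n))"
  shows "oP_plus_OP M (\<lambda>n \<omega>. SUP u\<in>{0..1}. \<bar>I2 n u \<omega>\<bar>) (\<lambda>n. 1 / sqrt (real n))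
           (\<lambda>n. real (L n) powr (min p 2) * real n powr (- 2 / max p 2))
         \<and> (p \<ge> 2 \<longrightarrow> (\<lambda>n. real (L n) / real n powr (1 / p - 1 / 4)) \<longlonglongrightarrow> 0 \<longrightarrow>
           small_oP M (\<lambda>n \<omega>. SUP u\<in>{0..1}. \<bar>I2 n u \<omega>\<bar>) (\<lambda>n. 1 / sqrt (real n)))
         \<and> (p < 2 \<longrightarrow> (\<lambda>n. real (L n) / real n powr (1 / (2 * p))) \<longlonglongrightarrow> 0 \<longrightarrow>
           small_oP M (\<lambda>n \<omega>. SUP u\<in>{0..1}. \<bar>I2 n u \<omega>\<bar>) (\<lambda>n. 1 / sqrt (real n)))"
proof -
  interpret plugin_remainder M eps Gn G f'' muhat mutilde \<tau> L p q C_G C_f \<delta>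
  proof (rule plugin_remainder.intro)
    show "q > 1"
      using q by simp
    show "norm (f'' x) \<le> C_f"
      if "x \<in> nbhd (convex hull ((\<lambda>u. integral\<^sup>L M (\<lambda>\<omega>. G u (epsvec eps 0 \<omega>))) ` {0..1})) \<delta>" for x
      using A4[unfolded Mset_def, OF that] norm_ge_zero[of "f' x"] by linarith
  qed (use M eps_rv Gn_meas G_meas p A1 A2 delta tau L A5 A6 mutilde in \<open>simp_all add: mun_def Mset_def\<close>)
  have "\<forall>\<^sub>F n in sequentially. 1 / sqrt (real n) > 0" "\<forall>\<^sub>F n in sequentially. rate n \<ge> 0"
    using eventually_ge_at_top[of 1] by (auto elim: eventually_mono)
  then show ?thesis
    using SUP_remainder_decomposition rate_ratio_tendsto_zero_ge2 rate_ratio_tendsto_zero_lt2 p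
    unfolding I2_def by (auto intro: small_oP_if_oP_plus_OP_faster[OF prob])
qed

end
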